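(* Let $n>2k$, $k\ge t+3$, and let $\mathcal F\subseteq\binom{[n]}{k}$ be a $t$-intersecting family with $\tau_t(\mathcal F)=t+2$. Then for every $E\in\binom{[n]}{t+1}$, $$\left|\{T\in\mathcal T_t(\mathcal F): E\subseteq T\}\right|\le k-t+1.$$
   Context: A family is $t$-intersecting if any two members meet in at least $t$ elements. A $t$-cover of $\mathcal F$ is a set $S\subseteq[n]$ with $|S\cap F|\ge t$ for all $F\in\mathcal F$; $\tau_t(\mathcal F)$ is the minimum size of a $t$-cover, and $\mathcal T_t(\mathcal F)$ is the set of all $t$-covers of $\mathcal F$ of size $\tau_t(\mathcal F)$. *)

theory Defs
  imports Main
begin

definition t_intersecting :: "nat \<Rightarrow> nat set set \<Rightarrow> bool" where
  "t_intersecting t F \<longleftrightarrow> (\<forall>A\<in>F. \<forall>B\<in>F. card (A \<inter> B) \<ge> t)"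

definition is_t_cover :: "nat \<Rightarrow> nat \<Rightarrow> nat set set \<Rightarrow> nat set \<Rightarrow> bool" where
  "is_t_cover n t F S \<longleftrightarrow> S \<subseteq> {1..n} \<and> (\<forall>F'\<in>F. card (S \<inter> F') \<ge> t)"

definition tau_t :: "nat \<Rightarrow> nat \<Rightarrow> nat set set \<Rightarrow> nat" where
  "tau_t n t F = (LEAST m. \<exists>S. is_t_cover n t F S \<and> card S = m)"

definition min_t_covers :: "nat \<Rightarrow> nat \<Rightarrow> nat set set \<Rightarrow> nat set set" where
  "min_t_covers n t F = {S. is_t_cover n t F S \<and> card S = tau_t n t F}"

end

theory Submission
  imports Defs
begin

(* Since |E| < tau_t(F), the set E is not a t-cover, so some F0 in F meets E in fewer than
   t points. A minimal t-cover T containing E has exactly one further point x, and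
   |T \<inter> F0| \<ge> t forces x \<in> F0 - E and |E \<inter> F0| = t - 1. Hence there are at most
   |F0 - E| = k - t + 1 such covers. *)

lemma tau_t_le_card:
  assumes "is_t_cover n t F S"
  shows "tau_t n t F \<le> card S"
  unfolding tau_t_def using assms by (intro Least_le) blast

lemma small_set_misses_member:
  assumes "S \<subseteq> {1..n}" and "card S < tau_t n t F"
  obtains F0 where "F0 \<in> F" and "card (S \<inter> F0) < t"
proof -
  have "\<not> is_t_cover n t F S"
    using assms(2) tau_t_le_card by (metis leD)
  with assms(1) show ?thesis
    using that unfolding is_t_cover_def by force
qed

lemma t_cover_one_point_extension:
  assumes "is_t_cover n t F T" and "finite T" and "E \<subseteq> T" and "card T = Suc (card E)"
    and "F0 \<in> F" and "card (E \<inter> F0) < t"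
  obtains x where "x \<in> F0 - E" and "T = insert x E" and "t = Suc (card (E \<inter> F0))"
proof -
  have "finite E" using assms(2,3) finite_subset by blast
  have "card (T - E) = 1"
    using assms(2-4) by (simp add: card_Diff_subset finite_subset)
  then obtain x where "T - E = {x}" by (auto simp: card_Suc_eq)
  then have T: "T = insert x E" and "x \<notin> E" using assms(3) by auto
  have ge: "t \<le> card (T \<inter> F0)"
    using assms(1,5) unfolding is_t_cover_def by auto
  have "x \<in> F0"
  proof (rule ccontr)
    assume "x \<notin> F0"
    then have "T \<inter> F0 = E \<inter> F0" using T by auto
    then show False using ge assms(6) by simp
  qed
  then have "T \<inter> F0 = insert x (E \<inter> F0)" using T by auto
  then have "card (T \<inter> F0) = Suc (card (E \<inter> F0))"
    using \<open>finite E\<close> \<open>x \<notin> E\<close> by simp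
  with ge assms(6) have "t = Suc (card (E \<inter> F0))" by linarith
  with that \<open>x \<in> F0\<close> \<open>x \<notin> E\<close> T show ?thesis by blast
qed

lemma min_t_cover_one_point_extension:
  assumes "T \<in> min_t_covers n t F" and "E \<subseteq> T" and "tau_t n t F = Suc (card E)"
    and "F0 \<in> F" and "card (E \<inter> F0) < t"
  obtains x where "x \<in> F0 - E" and "T = insert x E" and "t = Suc (card (E \<inter> F0))"
proof -
  have cover: "is_t_cover n t F T" and "card T = Suc (card E)"
    using assms(1,3) unfolding min_t_covers_def by auto
  moreover have "finite T"
    using cover unfolding is_t_cover_def by (auto intro: finite_subset)
  ultimately show ?thesis
    using t_cover_one_point_extension assms(2,4,5) that by blast
qed

theorem mainTheorem7:
  fixes n k t :: nat and F :: "nat set set" and E :: "nat set"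
  assumes "t \<ge> 1"
    and "n > 2 * k" and "k \<ge> t + 3"
    and "\<forall>A\<in>F. A \<subseteq> {1..n} \<and> card A = k"
    and "t_intersecting t F"
    and "tau_t n t F = t + 2"
    and "E \<subseteq> {1..n}" and "card E = t + 1"
  shows "card {T \<in> min_t_covers n t F. E \<subseteq> T} \<le> k - t + 1"
proof -
  let ?S = "{T \<in> min_t_covers n t F. E \<subseteq> T}"
  obtain F0 where F0: "F0 \<in> F" "card (E \<inter> F0) < t"
    using small_set_misses_member[of E n t F] assms(6-8) by auto
  have "finite F0" "card F0 = k" using F0(1) assms(4) by (auto intro: finite_subset)
  have extension: "\<exists>x\<in>F0 - E. T = insert x E \<and> t = Suc (card (E \<inter> F0))" if "T \<in> ?S" for T
    using that assms(6,8) by (auto elim: min_t_cover_one_point_extension[OF _ _ _ F0])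
  have "?S \<subseteq> (\<lambda>x. insert x E) ` (F0 - E)"
  proof
    fix T assume "T \<in> ?S"
    with extension obtain x where "x \<in> F0 - E" "T = insert x E" by blast
    then show "T \<in> (\<lambda>x. insert x E) ` (F0 - E)" by (rule rev_image_eqI)
  qed
  then have "card ?S \<le> card (F0 - E)" using \<open>finite F0\<close> by (intro surj_card_le) auto
  also have "\<dots> = k - card (E \<inter> F0)"
    using \<open>finite F0\<close> \<open>card F0 = k\<close> by (simp add: card_Diff_subset_Int Int_commute)
  finally have bound: "card ?S \<le> k - card (E \<inter> F0)" .
  show ?thesis
  proof (cases "?S = {}")
    case True
    then show ?thesis by (metis card.empty le0)
  next
    case False
    then obtain T where "T \<in> ?S" by blast
    with extension have "t = Suc (card (E \<inter> F0))" by blast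
    with bound show ?thesis by linarith
  qed
qed

end
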